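(* Let $\mathbb{F}$ be a field, $m,k,d,d'\in\mathbb{N}$, and $G,K,L$ finite subsets of $\mathbb{F}$ with $K\subseteq L$, $d'\ge|G|-2$ and $|K|=d+1$. Let $S\subseteq\mathbb{F}^{m+k}$ be a finite set and suppose there exist matrices $C\in\mathbb{F}^{L^m\times\ell}$ and $D\in\mathbb{F}^{S\times\ell}$ such that for all $Z\in\mathbb{F}^{\le d,\le d'}[X_1,\dots,X_m,Y_1,\dots,Y_k]$ and all $i\in\{1,\dots,\ell\}$, $$\sum_{\vec\alpha\in L^m}C_{\vec\alpha,i}\sum_{\vec y\in G^k}Z(\vec\alpha,\vec y)=\sum_{\vec q\in S}D_{\vec q,i}\,Z(\vec q).$$ Then $|S|\ge \mathrm{rank}(BC)\cdot\big(\min\{d'-|G|+2,\ |G|\}\big)^k$, where $B\in\mathbb{F}^{K^m\times L^m}$ is the matrix such that for every $\vec\alpha\in L^m$ and every polynomial $p\in\mathbb{F}[X_1,\dots,X_m]$ of individual degree at most $d$, $p(\vec\alpha)=\sum_{\vec\beta\in K^m}B_{\vec\beta,\vec\alpha}\,p(\vec\beta)$.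
   Context: $\mathbb{F}^{\le d,\le d'}[X_1,\dots,X_m,Y_1,\dots,Y_k]$ denotes the set of $(m+k)$-variate polynomials over $\mathbb{F}$ of individual degree at most $d$ in each of $X_1,\dots,X_m$ and at most $d'$ in each of $Y_1,\dots,Y_k$. Matrices indexed by sets $A\times B$ have rows indexed by $A$ and columns by $B$. *)

theory Defs
  imports Main "HOL-Library.FuncSet"
begin

text \<open>Points of F^n are functions nat => 'a, extensional on {0..<n}
  (i.e. elements of {0..<n} ->E UNIV).  Coordinates 0..m-1 are the X variables,
  coordinates m..m+k-1 are the Y variables.\<close>

definition exps :: "nat \<Rightarrow> nat \<Rightarrow> nat \<Rightarrow> nat \<Rightarrow> (nat \<Rightarrow> nat) set" where
  "exps m k d d' = {e. (\<forall>i<m. e i \<le> d) \<and> (\<forall>i. m \<le> i \<and> i < m + k \<longrightarrow> e i \<le> d')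
                        \<and> (\<forall>i. m + k \<le> i \<longrightarrow> e i = 0)}"

text \<open>A polynomial is represented by its coefficient function on exponent vectors.
  ipolys m k d d' is F^{<=d,<=d'}[X_1..X_m,Y_1..Y_k].\<close>
definition ipolys :: "nat \<Rightarrow> nat \<Rightarrow> nat \<Rightarrow> nat \<Rightarrow> ((nat \<Rightarrow> nat) \<Rightarrow> 'a::field) set" where
  "ipolys m k d d' = {c. \<forall>e. c e \<noteq> 0 \<longrightarrow> e \<in> exps m k d d'}"

definition peval :: "nat \<Rightarrow> ((nat \<Rightarrow> nat) \<Rightarrow> 'a::field) \<Rightarrow> (nat \<Rightarrow> 'a) \<Rightarrow> 'a" where
  "peval n c x = (\<Sum>e\<in>{e. c e \<noteq> 0}. c e * (\<Prod>i<n. x i ^ e i))"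

definition vappend :: "nat \<Rightarrow> nat \<Rightarrow> (nat \<Rightarrow> 'a) \<Rightarrow> (nat \<Rightarrow> 'a) \<Rightarrow> nat \<Rightarrow> 'a" where
  "vappend m k a y = (\<lambda>i. if i < m then a i else if i < m + k then y (i - m) else undefined)"

definition mat_rank :: "'r set \<Rightarrow> 'c set \<Rightarrow> ('r \<Rightarrow> 'c \<Rightarrow> 'a::field) \<Rightarrow> nat" where
  "mat_rank R Cs M = Max {card J | J. J \<subseteq> Cs \<and> finite J \<and>
      (\<forall>a. (\<forall>r\<in>R. (\<Sum>j\<in>J. a j * M r j) = 0) \<longrightarrow> (\<forall>j\<in>J. a j = 0))}"

end

theory Submission
  imports Defs "HOL-Computational_Algebra.Polynomial" "HOL-Library.Function_Algebras"
begin

text \<open>Take linearly independent columns J of BC with |J| = rank (BC), and T \<subseteq> G with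
  |T| = t = min (d' - |G| + 2) |G|. Write V A for the polynomial vanishing exactly on A and
  \<lambda> b for the Lagrange basis polynomial of K at b. For i \<in> J and g \<in> T^k, pair the vector
  q \<mapsto> D q i \<cdot> \<Prod>j. V (T - {g j}) (q (m + j)) on S with the test vector
  q \<mapsto> \<Prod>i. \<lambda> (\<beta> i) (q i) \<cdot> \<Prod>j. V (G - {g' j}) (q (m + j)). The pairing is the right-hand side of
  the hypothesis for the product polynomial Z = \<Prod>i. \<lambda> (\<beta> i) (X i) \<cdot> \<Prod>j. V (G - {g' j}) (Y j) \<cdot> V (T - {g j}) (Y j),
  which is admissible because (|G| - 1) + (|T| - 1) \<le> d'. On the left-hand side the Lagrange factor
  selects row \<beta> of B, and the sum of V (G - {a}) \<cdot> p over G is the value at a, where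
  V (T - {g j}) vanishes unless g j = g' j. So the pairing is a nonzero multiple of
  [g = g'] \<cdot> BC \<beta> i, and the |J| \<cdot> t^k vectors are linearly independent in F^S.\<close>

lemma sum_fun_apply: "(\<Sum>w\<in>A. f w) x = (\<Sum>w\<in>A. f w x)"
  by (induction A rule: infinite_finite_induct) auto

interpretation pointwise: vector_space "\<lambda>(c::'a::field) (f::'q \<Rightarrow> 'a) q. c * f q"
  by unfold_locales (auto simp: fun_eq_iff algebra_simps)

lemma pointwise_span_unit_vectors:
  fixes f :: "'q \<Rightarrow> 'a::field"
  assumes "finite Q" "\<And>q. q \<notin> Q \<Longrightarrow> f q = 0"
  shows "f \<in> pointwise.span ((\<lambda>s q. if q = s then 1 else 0) ` Q)"
proof -
  have "f = (\<Sum>s\<in>Q. (\<lambda>q. f s * (if q = s then 1 else 0)))"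
    using assms by (auto simp: fun_eq_iff sum_fun_apply if_distrib cong: if_cong)
  also have "\<dots> \<in> pointwise.span ((\<lambda>s q. if q = s then 1 else 0) ` Q)"
    by (intro pointwise.span_sum pointwise.span_scale pointwise.span_base) auto
  finally show ?thesis .
qed

lemma pointwise_independent_image:
  fixes u :: "'i \<Rightarrow> 'q \<Rightarrow> 'a::field"
  assumes "finite I" "inj_on u I"
    and independent: "\<And>c. \<forall>q. (\<Sum>x\<in>I. c x * u x q) = 0 \<Longrightarrow> \<forall>x\<in>I. c x = 0"
  shows "pointwise.independent (u ` I)"
  unfolding pointwise.independent_explicit_finite_subsets
proof (intro allI impI)
  fix t a assume t: "t \<subseteq> u ` I" "finite t" and zero: "(\<Sum>w\<in>t. (\<lambda>q. a w * w q)) = 0"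
  define c where "c x = (if u x \<in> t then a (u x) else 0)" for x
  have "(\<Sum>x\<in>I. c x * u x q) = 0" for q
  proof -
    have "(\<Sum>x\<in>I. c x * u x q) = (\<Sum>x\<in>I \<inter> u -` t. a (u x) * u x q)"
      using \<open>finite I\<close> by (intro sum.mono_neutral_cong_right) (auto simp: c_def)
    also have "\<dots> = (\<Sum>w\<in>u ` (I \<inter> u -` t). a w * w q)"
      using \<open>inj_on u I\<close> by (subst sum.reindex) (auto intro: inj_on_subset)
    also have "u ` (I \<inter> u -` t) = t" using t by auto
    finally show ?thesis using zero by (simp add: sum_fun_apply fun_eq_iff)
  qed
  then have "\<forall>x\<in>I. c x = 0" using independent by blast
  then show "\<forall>w\<in>t. a w = 0"
    using t unfolding c_def by (metis (no_types, lifting) image_iff subsetD)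
qed

lemma card_le_card_if_independent:
  fixes v :: "'i \<Rightarrow> 'q \<Rightarrow> 'a::field"
  assumes "finite I" "finite Q"
    and independent: "\<And>c. \<forall>q\<in>Q. (\<Sum>x\<in>I. c x * v x q) = 0 \<Longrightarrow> \<forall>x\<in>I. c x = 0"
  shows "card I \<le> card Q"
proof -
  define u where "u x q = (if q \<in> Q then v x q else 0)" for x q
  have combination_zero: "\<forall>x\<in>I. c x = 0" if zero: "\<forall>q. (\<Sum>x\<in>I. c x * u x q) = 0" for c
  proof -
    have "(\<Sum>x\<in>I. c x * v x q) = 0" if "q \<in> Q" for q
      using zero[rule_format, of q] that by (simp add: u_def)
    then show ?thesis using independent by blast
  qed
  have inj: "inj_on u I"
  proof (rule inj_onI, rule ccontr)
    fix x y assume xy: "x \<in> I" "y \<in> I" "u x = u y" "x \<noteq> y"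
    define c where "c z = (if z = x then 1 else if z = y then -1 else (0::'a))" for z
    have "(\<Sum>z\<in>I. c z * u z q) = (\<Sum>z\<in>{x,y}. c z * u z q)" for q
      using xy \<open>finite I\<close> by (intro sum.mono_neutral_right) (auto simp: c_def)
    then have "\<forall>z\<in>I. c z = 0" using xy by (intro combination_zero) (simp add: c_def)
    then have "c x = 0" using xy(1) by blast
    then show False by (simp add: c_def)
  qed
  define unit_vector where "unit_vector s = (\<lambda>q. if q = s then 1 else (0::'a))" for s :: 'q
  have "u ` I \<subseteq> pointwise.span (unit_vector ` Q)"
    unfolding unit_vector_def
    by (rule image_subsetI, rule pointwise_span_unit_vectors[OF \<open>finite Q\<close>]) (simp add: u_def)
  then have "card (u ` I) \<le> card (unit_vector ` Q)"
    using pointwise.independent_span_bound[OF finite_imageI[OF \<open>finite Q\<close>]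
        pointwise_independent_image[OF \<open>finite I\<close> inj combination_zero]] by blast
  also have "\<dots> \<le> card Q" using \<open>finite Q\<close> card_image_le by blast
  finally show ?thesis using card_image[OF inj] by simp
qed

lemma family_independent_by_test_vectors:
  fixes v :: "'i \<times> 'g \<Rightarrow> 'q \<Rightarrow> 'a::field" and w :: "'r \<Rightarrow> 'g \<Rightarrow> 'q \<Rightarrow> 'a"
  assumes "finite J" "finite P"
    and pairing: "\<And>i g r g'. i \<in> J \<Longrightarrow> g \<in> P \<Longrightarrow> r \<in> R \<Longrightarrow> g' \<in> P \<Longrightarrow>
      (\<Sum>q\<in>S. v (i, g) q * w r g' q) = (if g = g' then \<kappa> g' else 0) * M r i"
    and "\<And>g. g \<in> P \<Longrightarrow> \<kappa> g \<noteq> 0"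
    and columns_independent: "\<And>a. \<forall>r\<in>R. (\<Sum>i\<in>J. a i * M r i) = 0 \<Longrightarrow> \<forall>i\<in>J. a i = 0"
    and combination_zero: "\<forall>q\<in>S. (\<Sum>x\<in>J \<times> P. c x * v x q) = 0"
  shows "\<forall>x\<in>J \<times> P. c x = 0"
proof (intro ballI)
  fix x assume "x \<in> J \<times> P"
  then obtain i0 g0 where x: "x = (i0, g0)" "i0 \<in> J" "g0 \<in> P" by blast
  have "\<kappa> g0 * (\<Sum>i\<in>J. c (i, g0) * M r i) = 0" if "r \<in> R" for r
  proof -
    have "0 = (\<Sum>q\<in>S. (\<Sum>x\<in>J \<times> P. c x * v x q) * w r g0 q)"
      using combination_zero by simp
    also have "\<dots> = (\<Sum>x\<in>J \<times> P. c x * (\<Sum>q\<in>S. v x q * w r g0 q))"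
      by (simp only: sum_distrib_left sum_distrib_right mult.assoc) (rule sum.swap)
    also have "\<dots> = (\<Sum>i\<in>J. \<Sum>g\<in>P. c (i, g) * (\<Sum>q\<in>S. v (i, g) q * w r g0 q))"
      by (simp add: sum.cartesian_product)
    also have "\<dots> = (\<Sum>i\<in>J. \<Sum>g\<in>P. if g = g0 then c (i, g0) * (\<kappa> g0 * M r i) else 0)"
      using x that by (intro sum.cong refl) (simp add: pairing)
    also have "\<dots> = \<kappa> g0 * (\<Sum>i\<in>J. c (i, g0) * M r i)"
      using x \<open>finite P\<close> by (simp add: sum_distrib_left mult_ac)
    finally show ?thesis by simp
  qed
  then have "\<forall>i\<in>J. c (i, g0) = 0"
    using assms(4)[OF x(3)] by (intro columns_independent) simp
  then show "c x = 0" using x by simp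
qed

lemma mat_rank_attained:
  fixes M :: "'r \<Rightarrow> 'c \<Rightarrow> 'a::field"
  assumes "finite Cs"
  obtains J where "J \<subseteq> Cs" "card J = mat_rank R Cs M"
    and "\<And>a. \<forall>r\<in>R. (\<Sum>j\<in>J. a j * M r j) = 0 \<Longrightarrow> \<forall>j\<in>J. a j = 0"
proof -
  define ranks where "ranks = {card J | J. J \<subseteq> Cs \<and> finite J \<and>
      (\<forall>a. (\<forall>r\<in>R. (\<Sum>j\<in>J. a j * M r j) = 0) \<longrightarrow> (\<forall>j\<in>J. a j = 0))}"
  have "ranks \<subseteq> card ` Pow Cs" unfolding ranks_def by blast
  then have "finite ranks" using assms finite_subset by blast
  moreover have "card {} \<in> ranks" unfolding ranks_def by (rule CollectI, rule exI[of _ "{}"]) simp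
  ultimately have "Max ranks \<in> ranks" using Max_in by blast
  then obtain J where "J \<subseteq> Cs" "card J = Max ranks"
    and "\<forall>a. (\<forall>r\<in>R. (\<Sum>j\<in>J. a j * M r j) = 0) \<longrightarrow> (\<forall>j\<in>J. a j = 0)"
    unfolding ranks_def by auto
  then show ?thesis using that unfolding mat_rank_def ranks_def by blast
qed

lemma prod_lessThan_add:
  "(\<Prod>i<m + n. f i) = (\<Prod>i<m. f i) * (\<Prod>j<n::nat. f (m + j) :: 'a::comm_monoid_mult)"
  by (induction n) (auto simp: mult.assoc)

definition tensor_poly :: "nat \<Rightarrow> (nat \<Rightarrow> 'a::field poly) \<Rightarrow> (nat \<Rightarrow> nat) \<Rightarrow> 'a" where
  "tensor_poly n ps e = (if \<forall>i\<ge>n. e i = 0 then \<Prod>i<n. coeff (ps i) (e i) else 0)"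

lemma tensor_poly_nonzero_exponent:
  assumes "tensor_poly n ps e \<noteq> 0"
  shows "\<forall>i<n. e i \<le> degree (ps i)" and "\<forall>i\<ge>n. e i = 0"
  using assms le_degree by (auto simp: tensor_poly_def split: if_splits)

lemma tensor_poly_in_ipolys:
  assumes "\<forall>i<m. degree (ps i) \<le> d" and "\<forall>i. m \<le> i \<and> i < m + k \<longrightarrow> degree (ps i) \<le> d'"
  shows "tensor_poly (m + k) ps \<in> ipolys m k d d'"
  unfolding ipolys_def
proof (intro CollectI allI impI)
  fix e assume "tensor_poly (m + k) ps e \<noteq> 0"
  note exponent = tensor_poly_nonzero_exponent[OF this]
  have "\<forall>i<m. e i \<le> d" using exponent(1) assms(1) by (meson le_trans trans_less_add1)
  moreover have "\<forall>i. m \<le> i \<and> i < m + k \<longrightarrow> e i \<le> d'" using exponent(1) assms(2) by (meson le_trans)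
  ultimately show "e \<in> exps m k d d'" using exponent(2) unfolding exps_def by blast
qed

lemma peval_tensor_poly: "peval n (tensor_poly n ps) x = (\<Prod>i<n. poly (ps i) (x i))"
proof -
  define P where "P = Pi\<^sub>E {..<n} (\<lambda>i. {..degree (ps i)})"
  define extend where "extend g = (\<lambda>i. if i < n then g i else (0::nat))" for g :: "nat \<Rightarrow> nat"
  have "inj_on extend P"
  proof (rule inj_onI, rule PiE_ext)
    fix g g' i assume "extend g = extend g'" "i \<in> {..<n}"
    then show "g i = g' i" by (metis extend_def lessThan_iff)
  qed (auto simp: P_def)
  moreover have support: "{e. tensor_poly n ps e \<noteq> 0} \<subseteq> extend ` P"
  proof
    fix e assume "e \<in> {e. tensor_poly n ps e \<noteq> 0}"
    then have "restrict e {..<n} \<in> P" "e = extend (restrict e {..<n})"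
      using tensor_poly_nonzero_exponent[of n ps e] by (auto simp: P_def extend_def)
    then show "e \<in> extend ` P" by blast
  qed
  moreover have "finite P" unfolding P_def by (intro finite_PiE) auto
  ultimately have "peval n (tensor_poly n ps) x
      = (\<Sum>g\<in>P. tensor_poly n ps (extend g) * (\<Prod>i<n. x i ^ extend g i))"
    unfolding peval_def by (subst sum.mono_neutral_left[OF _ support]) (auto simp: sum.reindex)
  also have "\<dots> = (\<Sum>g\<in>P. \<Prod>i<n. coeff (ps i) (g i) * x i ^ g i)"
    by (intro sum.cong refl) (simp add: tensor_poly_def extend_def prod.distrib)
  also have "\<dots> = (\<Prod>i<n. \<Sum>j\<le>degree (ps i). coeff (ps i) j * x i ^ j)"
    unfolding P_def by (rule prod_sum_PiE[symmetric]) auto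
  finally show ?thesis by (simp add: poly_altdef)
qed

lemma sum_cube_peval_tensor_poly:
  assumes "finite G"
  shows "(\<Sum>y\<in>{0..<k} \<rightarrow>\<^sub>E G. peval (m + k) (tensor_poly (m + k) ps) (vappend m k \<alpha> y))
    = (\<Prod>i<m. poly (ps i) (\<alpha> i)) * (\<Prod>j<k. \<Sum>y\<in>G. poly (ps (m + j)) y)"
proof -
  have "peval (m + k) (tensor_poly (m + k) ps) (vappend m k \<alpha> y)
      = (\<Prod>i<m. poly (ps i) (\<alpha> i)) * (\<Prod>j<k. poly (ps (m + j)) (y j))" for y
    unfolding peval_tensor_poly prod_lessThan_add by (simp add: vappend_def)
  then have "(\<Sum>y\<in>{0..<k} \<rightarrow>\<^sub>E G. peval (m + k) (tensor_poly (m + k) ps) (vappend m k \<alpha> y))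
      = (\<Sum>y\<in>{..<k} \<rightarrow>\<^sub>E G. (\<Prod>i<m. poly (ps i) (\<alpha> i)) * (\<Prod>j<k. poly (ps (m + j)) (y j)))"
    by (simp add: atLeast0LessThan)
  also have "\<dots> = (\<Prod>i<m. poly (ps i) (\<alpha> i)) * (\<Prod>j<k. \<Sum>y\<in>G. poly (ps (m + j)) y)"
    by (subst prod_sum_PiE) (simp_all add: assms sum_distrib_left)
  finally show ?thesis .
qed

definition vanishing_poly :: "'a::field set \<Rightarrow> 'a poly" where
  "vanishing_poly A = (\<Prod>a\<in>A. [:-a, 1:])"

lemma poly_vanishing_poly: "poly (vanishing_poly A) x = (\<Prod>a\<in>A. x - a)"
  by (simp add: vanishing_poly_def poly_prod)

lemma poly_vanishing_poly_eq_0_iff: "finite A \<Longrightarrow> poly (vanishing_poly A) x = 0 \<longleftrightarrow> x \<in> A"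
  by (simp add: poly_vanishing_poly)

lemma degree_vanishing_poly: "finite A \<Longrightarrow> degree (vanishing_poly A) \<le> card A"
  unfolding vanishing_poly_def using degree_prod_sum_le[of A "\<lambda>a. [:-a, 1:]"] by (simp add: o_def)

lemma sum_poly_vanishing_poly_mult:
  assumes "finite G" "a \<in> G"
  shows "(\<Sum>y\<in>G. poly (vanishing_poly (G - {a}) * p) y) = poly (vanishing_poly (G - {a}) * p) a"
proof -
  have "(\<Sum>y\<in>G - {a}. poly (vanishing_poly (G - {a}) * p) y) = 0"
    using assms by (intro sum.neutral) (simp add: poly_vanishing_poly_eq_0_iff)
  then show ?thesis using assms by (simp add: sum.remove)
qed

definition lagrange_basis :: "'a::field set \<Rightarrow> 'a \<Rightarrow> 'a poly" where
  "lagrange_basis K b = smult (inverse (\<Prod>h\<in>K - {b}. b - h)) (vanishing_poly (K - {b}))"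

lemma poly_lagrange_basis:
  assumes "finite K" "x \<in> K"
  shows "poly (lagrange_basis K b) x = (if x = b then 1 else 0)"
  using assms by (simp add: lagrange_basis_def poly_vanishing_poly prod_zero_iff)

lemma degree_lagrange_basis: "finite K \<Longrightarrow> b \<in> K \<Longrightarrow> degree (lagrange_basis K b) \<le> card K - 1"
  unfolding lagrange_basis_def using degree_vanishing_poly[of "K - {b}"] by simp

lemma prod_poly_lagrange_basis:
  fixes m :: nat
  assumes "finite K" "\<beta>0 \<in> {0..<m} \<rightarrow>\<^sub>E K" "\<beta> \<in> {0..<m} \<rightarrow>\<^sub>E K"
  shows "(\<Prod>i<m. poly (lagrange_basis K (\<beta>0 i)) (\<beta> i)) = (if \<beta> = \<beta>0 then 1 else 0)"
proof -
  have "poly (lagrange_basis K (\<beta>0 i)) (\<beta> i) = (if \<beta> i = \<beta>0 i then 1 else 0)" if "i < m" for i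
    using assms(1) PiE_mem[OF assms(3)] that by (intro poly_lagrange_basis) auto
  then have "(\<Prod>i<m. poly (lagrange_basis K (\<beta>0 i)) (\<beta> i)) = (\<Prod>i<m. if \<beta> i = \<beta>0 i then 1 else 0)"
    by simp
  also have "\<dots> = (if \<beta> = \<beta>0 then 1 else 0)"
    using PiE_ext[OF assms(3,2)] by (auto simp: prod_zero_iff)
  finally show ?thesis .
qed

lemma interpolation_matrix_entry:
  fixes K L :: "'a::field set" and B :: "(nat \<Rightarrow> 'a) \<Rightarrow> (nat \<Rightarrow> 'a) \<Rightarrow> 'a"
  assumes "finite K" "card K = d + 1"
    and B_def: "\<forall>\<alpha> \<in> {0..<m} \<rightarrow>\<^sub>E L. \<forall>p \<in> ipolys m 0 d 0.
        peval m p \<alpha> = (\<Sum>\<beta>\<in>{0..<m} \<rightarrow>\<^sub>E K. B \<beta> \<alpha> * peval m p \<beta>)"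
    and "\<beta>0 \<in> {0..<m} \<rightarrow>\<^sub>E K" "\<alpha> \<in> {0..<m} \<rightarrow>\<^sub>E L"
  shows "B \<beta>0 \<alpha> = (\<Prod>i<m. poly (lagrange_basis K (\<beta>0 i)) (\<alpha> i))"
proof -
  define p where "p = tensor_poly m (\<lambda>i. lagrange_basis K (\<beta>0 i))"
  have "\<forall>i<m. degree (lagrange_basis K (\<beta>0 i)) \<le> d"
    using assms degree_lagrange_basis[of K] by (simp add: PiE_iff)
  then have "p \<in> ipolys m 0 d 0"
    unfolding p_def using tensor_poly_in_ipolys[of m "\<lambda>i. lagrange_basis K (\<beta>0 i)" d 0 0] by auto
  then have "peval m p \<alpha> = (\<Sum>\<beta>\<in>{0..<m} \<rightarrow>\<^sub>E K. B \<beta> \<alpha> * peval m p \<beta>)"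
    using B_def assms(5) by blast
  then have "(\<Prod>i<m. poly (lagrange_basis K (\<beta>0 i)) (\<alpha> i))
      = (\<Sum>\<beta>\<in>{0..<m} \<rightarrow>\<^sub>E K. B \<beta> \<alpha> * (\<Prod>i<m. poly (lagrange_basis K (\<beta>0 i)) (\<beta> i)))"
    by (simp add: p_def peval_tensor_poly)
  also have "\<dots> = (\<Sum>\<beta>\<in>{0..<m} \<rightarrow>\<^sub>E K. if \<beta> = \<beta>0 then B \<beta> \<alpha> else 0)"
    using assms by (intro sum.cong refl) (simp add: prod_poly_lagrange_basis)
  also have "\<dots> = B \<beta>0 \<alpha>"
    using assms by (simp add: finite_PiE)
  finally show ?thesis by simp
qed

lemma degree_vanishing_poly_mult_le:
  assumes "finite G" "finite T" "a \<in> G" "b \<in> T" "card G + card T \<le> d + 2"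
  shows "degree (vanishing_poly (G - {a}) * vanishing_poly (T - {b})) \<le> d"
proof -
  have "degree (vanishing_poly (G - {a}) * vanishing_poly (T - {b}))
      \<le> degree (vanishing_poly (G - {a})) + degree (vanishing_poly (T - {b}))"
    by (rule degree_mult_le)
  also have "\<dots> \<le> card (G - {a}) + card (T - {b})"
    using assms by (intro add_mono degree_vanishing_poly) auto
  also have "\<dots> \<le> d" using assms card_gt_0_iff[of G] card_gt_0_iff[of T] by auto
  finally show ?thesis .
qed

lemma prod_sum_poly_vanishing_poly_mult:
  fixes k :: nat
  assumes "finite G" "T \<subseteq> G" "g0 \<in> {0..<k} \<rightarrow>\<^sub>E T" "g \<in> {0..<k} \<rightarrow>\<^sub>E T"
  shows "(\<Prod>j<k. \<Sum>y\<in>G. poly (vanishing_poly (G - {g0 j}) * vanishing_poly (T - {g j})) y)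
    = (if g = g0 then \<Prod>j<k. poly (vanishing_poly (G - {g0 j}) * vanishing_poly (T - {g0 j})) (g0 j) else 0)"
proof -
  have "finite T" using assms finite_subset by blast
  have "(\<Prod>j<k. \<Sum>y\<in>G. poly (vanishing_poly (G - {g0 j}) * vanishing_poly (T - {g j})) y)
      = (\<Prod>j<k. poly (vanishing_poly (G - {g0 j}) * vanishing_poly (T - {g j})) (g0 j))"
    using assms PiE_mem[OF assms(3)] by (intro prod.cong refl sum_poly_vanishing_poly_mult) auto
  moreover have "poly (vanishing_poly (T - {g j})) (g0 j) = 0" if "j < k" "g j \<noteq> g0 j" for j
    using that PiE_mem[OF assms(3)] \<open>finite T\<close> by (simp add: poly_vanishing_poly_eq_0_iff)
  moreover have "g = g0" if "\<forall>j<k. g j = g0 j"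
    using that PiE_ext[OF assms(4,3)] by simp
  ultimately show ?thesis by (auto simp: prod_zero_iff)
qed

lemma query_identity_on_test_polynomial:
  fixes G K L T :: "'a::field set"
    and m k d d' l :: nat
    and S :: "(nat \<Rightarrow> 'a) set"
    and C D :: "(nat \<Rightarrow> 'a) \<Rightarrow> nat \<Rightarrow> 'a"
    and B :: "(nat \<Rightarrow> 'a) \<Rightarrow> (nat \<Rightarrow> 'a) \<Rightarrow> 'a"
  assumes "finite G" "finite K" "T \<subseteq> G" "card K = d + 1" "card G + card T \<le> d' + 2"
    and hyp: "\<forall>Z \<in> ipolys m k d d'. \<forall>i \<in> {1..l}.
        (\<Sum>\<alpha>\<in>{0..<m} \<rightarrow>\<^sub>E L. C \<alpha> i * (\<Sum>y\<in>{0..<k} \<rightarrow>\<^sub>E G. peval (m+k) Z (vappend m k \<alpha> y)))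
        = (\<Sum>q\<in>S. D q i * peval (m+k) Z q)"
    and B_def: "\<forall>\<alpha> \<in> {0..<m} \<rightarrow>\<^sub>E L. \<forall>p \<in> ipolys m 0 d 0.
        peval m p \<alpha> = (\<Sum>\<beta>\<in>{0..<m} \<rightarrow>\<^sub>E K. B \<beta> \<alpha> * peval m p \<beta>)"
    and "\<beta>0 \<in> {0..<m} \<rightarrow>\<^sub>E K" "g0 \<in> {0..<k} \<rightarrow>\<^sub>E T" "g \<in> {0..<k} \<rightarrow>\<^sub>E T" "i \<in> {1..l}"
  shows "(\<Sum>q\<in>S. (D q i * (\<Prod>j<k. poly (vanishing_poly (T - {g j})) (q (m + j))))
      * ((\<Prod>i<m. poly (lagrange_basis K (\<beta>0 i)) (q i))
        * (\<Prod>j<k. poly (vanishing_poly (G - {g0 j})) (q (m + j)))))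
    = (if g = g0 then \<Prod>j<k. poly (vanishing_poly (G - {g0 j}) * vanishing_poly (T - {g0 j})) (g0 j)
       else 0) * (\<Sum>\<alpha>\<in>{0..<m} \<rightarrow>\<^sub>E L. B \<beta>0 \<alpha> * C \<alpha> i)"
proof -
  have "finite T" using assms finite_subset by blast
  define ps where "ps j = (if j < m then lagrange_basis K (\<beta>0 j)
    else vanishing_poly (G - {g0 (j - m)}) * vanishing_poly (T - {g (j - m)}))" for j
  define Z where "Z = tensor_poly (m + k) ps"
  have "\<forall>j<m. degree (ps j) \<le> d"
    using assms PiE_mem[OF assms(8)] degree_lagrange_basis[of K] by (simp add: ps_def)
  moreover have "degree (ps j) \<le> d'" if "m \<le> j" "j < m + k" for j
    using that assms \<open>finite T\<close> PiE_mem[OF assms(9)] PiE_mem[OF assms(10)]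
    by (simp add: ps_def degree_vanishing_poly_mult_le subsetD)
  ultimately have "Z \<in> ipolys m k d d'"
    unfolding Z_def by (intro tensor_poly_in_ipolys) auto
  then have query: "(\<Sum>\<alpha>\<in>{0..<m} \<rightarrow>\<^sub>E L. C \<alpha> i * (\<Sum>y\<in>{0..<k} \<rightarrow>\<^sub>E G. peval (m + k) Z (vappend m k \<alpha> y)))
      = (\<Sum>q\<in>S. D q i * peval (m + k) Z q)"
    using hyp assms(11) by blast
  define \<kappa> where "\<kappa> = (if g = g0
    then \<Prod>j<k. poly (vanishing_poly (G - {g0 j}) * vanishing_poly (T - {g0 j})) (g0 j) else 0)"
  have "(\<Sum>y\<in>{0..<k} \<rightarrow>\<^sub>E G. peval (m + k) Z (vappend m k \<alpha> y)) = \<kappa> * B \<beta>0 \<alpha>"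
    if "\<alpha> \<in> {0..<m} \<rightarrow>\<^sub>E L" for \<alpha>
    using interpolation_matrix_entry[OF assms(2,4) B_def assms(8) that]
      prod_sum_poly_vanishing_poly_mult[OF assms(1,3,9,10)]
    by (simp add: Z_def sum_cube_peval_tensor_poly assms(1) ps_def \<kappa>_def)
  then have "(\<Sum>\<alpha>\<in>{0..<m} \<rightarrow>\<^sub>E L. C \<alpha> i * (\<Sum>y\<in>{0..<k} \<rightarrow>\<^sub>E G. peval (m + k) Z (vappend m k \<alpha> y)))
      = \<kappa> * (\<Sum>\<alpha>\<in>{0..<m} \<rightarrow>\<^sub>E L. B \<beta>0 \<alpha> * C \<alpha> i)"
    by (simp add: sum_distrib_left mult_ac cong: sum.cong)
  moreover have "peval (m + k) Z q = (\<Prod>i<m. poly (lagrange_basis K (\<beta>0 i)) (q i))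
      * (\<Prod>j<k. poly (vanishing_poly (G - {g0 j})) (q (m + j)))
      * (\<Prod>j<k. poly (vanishing_poly (T - {g j})) (q (m + j)))" for q
    by (simp add: Z_def peval_tensor_poly prod_lessThan_add ps_def prod.distrib mult.assoc)
  ultimately show ?thesis
    using query by (simp add: \<kappa>_def mult_ac)
qed

lemma query_vectors_independent:
  fixes G K L T :: "'a::field set"
    and m k d d' l :: nat
    and S :: "(nat \<Rightarrow> 'a) set"
    and C D :: "(nat \<Rightarrow> 'a) \<Rightarrow> nat \<Rightarrow> 'a"
    and B :: "(nat \<Rightarrow> 'a) \<Rightarrow> (nat \<Rightarrow> 'a) \<Rightarrow> 'a"
  assumes "finite G" "finite K" "T \<subseteq> G" "card K = d + 1" "card G + card T \<le> d' + 2"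
    and hyp: "\<forall>Z \<in> ipolys m k d d'. \<forall>i \<in> {1..l}.
        (\<Sum>\<alpha>\<in>{0..<m} \<rightarrow>\<^sub>E L. C \<alpha> i * (\<Sum>y\<in>{0..<k} \<rightarrow>\<^sub>E G. peval (m+k) Z (vappend m k \<alpha> y)))
        = (\<Sum>q\<in>S. D q i * peval (m+k) Z q)"
    and B_def: "\<forall>\<alpha> \<in> {0..<m} \<rightarrow>\<^sub>E L. \<forall>p \<in> ipolys m 0 d 0.
        peval m p \<alpha> = (\<Sum>\<beta>\<in>{0..<m} \<rightarrow>\<^sub>E K. B \<beta> \<alpha> * peval m p \<beta>)"
    and "J \<subseteq> {1..l}"
    and J_independent: "\<And>a. \<forall>\<beta>\<in>{0..<m} \<rightarrow>\<^sub>E K.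
        (\<Sum>i\<in>J. a i * (\<Sum>\<alpha>\<in>{0..<m} \<rightarrow>\<^sub>E L. B \<beta> \<alpha> * C \<alpha> i)) = 0 \<Longrightarrow> \<forall>i\<in>J. a i = 0"
    and combination_zero: "\<forall>q\<in>S. (\<Sum>x\<in>J \<times> ({0..<k} \<rightarrow>\<^sub>E T).
        c x * (D q (fst x) * (\<Prod>j<k. poly (vanishing_poly (T - {snd x j})) (q (m + j))))) = 0"
  shows "\<forall>x\<in>J \<times> ({0..<k} \<rightarrow>\<^sub>E T). c x = 0"
proof -
  have "finite J" "finite T" using assms finite_subset by (metis finite_atLeastAtMost)+
  define w where "w \<beta> g' q = (\<Prod>i<m. poly (lagrange_basis K (\<beta> i)) (q i))
    * (\<Prod>j<k. poly (vanishing_poly (G - {g' j})) (q (m + j)))" for \<beta> g' and q :: "nat \<Rightarrow> 'a"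
  define \<kappa> where "\<kappa> g = (\<Prod>j<k. poly (vanishing_poly (G - {g j}) * vanishing_poly (T - {g j})) (g j))"
    for g
  have "finite ({0..<k} \<rightarrow>\<^sub>E T)" using \<open>finite T\<close> by (simp add: finite_PiE)
  moreover have "(\<Sum>q\<in>S. D q (fst (i, g)) * (\<Prod>j<k. poly (vanishing_poly (T - {snd (i, g) j})) (q (m + j)))
      * w \<beta> g' q) = (if g = g' then \<kappa> g' else 0) * (\<Sum>\<alpha>\<in>{0..<m} \<rightarrow>\<^sub>E L. B \<beta> \<alpha> * C \<alpha> i)"
    if "i \<in> J" "g \<in> {0..<k} \<rightarrow>\<^sub>E T" "\<beta> \<in> {0..<m} \<rightarrow>\<^sub>E K" "g' \<in> {0..<k} \<rightarrow>\<^sub>E T" for i g \<beta> g'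
    unfolding w_def \<kappa>_def fst_conv snd_conv
    using assms that by (intro query_identity_on_test_polynomial) auto
  moreover have "\<kappa> g \<noteq> 0" if "g \<in> {0..<k} \<rightarrow>\<^sub>E T" for g
    using that assms(1,3) \<open>finite T\<close> by (auto simp: \<kappa>_def poly_vanishing_poly_eq_0_iff)
  ultimately show ?thesis
    by (rule family_independent_by_test_vectors[where w = w and v = "\<lambda>x q. D q (fst x)
      * (\<Prod>j<k. poly (vanishing_poly (T - {snd x j})) (q (m + j)))",
      OF \<open>finite J\<close> _ _ _ J_independent combination_zero])
qed

theorem lemma8p1:
  fixes G K L :: "'a::field set"
    and m k d d' l :: nat
    and S :: "(nat \<Rightarrow> 'a) set"
    and C :: "(nat \<Rightarrow> 'a) \<Rightarrow> nat \<Rightarrow> 'a"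
    and D :: "(nat \<Rightarrow> 'a) \<Rightarrow> nat \<Rightarrow> 'a"
    and B :: "(nat \<Rightarrow> 'a) \<Rightarrow> (nat \<Rightarrow> 'a) \<Rightarrow> 'a"
  assumes "finite G" and "finite K" and "finite L" and "K \<subseteq> L"
    and "card G \<le> d' + 2"
    and "card K = d + 1"
    and "finite S" and "S \<subseteq> {0..<m+k} \<rightarrow>\<^sub>E UNIV"
    and hyp: "\<forall>Z \<in> ipolys m k d d'. \<forall>i \<in> {1..l}.
        (\<Sum>\<alpha>\<in>{0..<m} \<rightarrow>\<^sub>E L. C \<alpha> i * (\<Sum>y\<in>{0..<k} \<rightarrow>\<^sub>E G. peval (m+k) Z (vappend m k \<alpha> y)))
        = (\<Sum>q\<in>S. D q i * peval (m+k) Z q)"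
    and B_def: "\<forall>\<alpha> \<in> {0..<m} \<rightarrow>\<^sub>E L. \<forall>p \<in> ipolys m 0 d 0.
        peval m p \<alpha> = (\<Sum>\<beta>\<in>{0..<m} \<rightarrow>\<^sub>E K. B \<beta> \<alpha> * peval m p \<beta>)"
  shows "card S \<ge> mat_rank ({0..<m} \<rightarrow>\<^sub>E K) {1..l}
                     (\<lambda>\<beta> i. \<Sum>\<alpha>\<in>{0..<m} \<rightarrow>\<^sub>E L. B \<beta> \<alpha> * C \<alpha> i)
                   * (min (d' + 2 - card G) (card G)) ^ k"
proof -
  obtain J where J: "J \<subseteq> {1..l}"
      "card J = mat_rank ({0..<m} \<rightarrow>\<^sub>E K) {1..l} (\<lambda>\<beta> i. \<Sum>\<alpha>\<in>{0..<m} \<rightarrow>\<^sub>E L. B \<beta> \<alpha> * C \<alpha> i)"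
    and J_independent: "\<And>a. \<forall>\<beta>\<in>{0..<m} \<rightarrow>\<^sub>E K. (\<Sum>i\<in>J. a i * (\<Sum>\<alpha>\<in>{0..<m} \<rightarrow>\<^sub>E L. B \<beta> \<alpha> * C \<alpha> i)) = 0
      \<Longrightarrow> \<forall>i\<in>J. a i = 0"
    by (rule mat_rank_attained[of "{1..l}" "{0..<m} \<rightarrow>\<^sub>E K" "\<lambda>\<beta> i. \<Sum>\<alpha>\<in>{0..<m} \<rightarrow>\<^sub>E L. B \<beta> \<alpha> * C \<alpha> i"])
      (simp, blast)
  define t where "t = min (d' + 2 - card G) (card G)"
  obtain T where T: "T \<subseteq> G" "card T = t"
    using obtain_subset_with_card_n[of t G] by (auto simp: t_def)
  have finite_index: "finite (J \<times> ({0..<k} \<rightarrow>\<^sub>E T))"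
    using J(1) T(1) \<open>finite G\<close> by (auto intro: finite_subset finite_PiE)
  have "card G + card T \<le> d' + 2" using assms T by (simp add: t_def)
  then have "\<forall>x\<in>J \<times> ({0..<k} \<rightarrow>\<^sub>E T). c x = 0" if "\<forall>q\<in>S. (\<Sum>x\<in>J \<times> ({0..<k} \<rightarrow>\<^sub>E T).
      c x * (D q (fst x) * (\<Prod>j<k. poly (vanishing_poly (T - {snd x j})) (q (m + j))))) = 0" for c
    using hyp B_def J(1) J_independent that
    by (rule query_vectors_independent[OF assms(1,2) T(1) assms(6)])
  then have "card (J \<times> ({0..<k} \<rightarrow>\<^sub>E T)) \<le> card S"
    by (rule card_le_card_if_independent[OF finite_index \<open>finite S\<close>])
  moreover have "card (J \<times> ({0..<k} \<rightarrow>\<^sub>E T)) = card J * t ^ k"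
    using T by (simp add: card_cartesian_product card_PiE)
  ultimately show ?thesis using J(2) by (simp add: t_def)
qed

end
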